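(* In the calculus $\lambda^{RE}$ described in the context: if $e_1\Rrightarrow e_2$, then for every constant $c$, $e_1\to^*c$ if and only if $e_2\to^*c$.
   Context: Syntax of $\lambda^{RE}$. Basic types $b ::= \mathsf{Bool}\mid\mathsf{Unit}$. Constants $c ::= \mathsf{true}\mid\mathsf{false}\mid\mathsf{unit}\mid (=_b)\mid (=_{(c,b)})$. Expressions $e ::= c\mid x\mid e\ e\mid \lambda x{:}\tau.\,e\mid \mathsf{BEq}_b\ e\ e\ e\mid \mathsf{XEq}_{x:\tau\to\tau}\ e\ e\ e$. Values $v ::= c\mid \lambda x{:}\tau.\,e\mid \mathsf{BEq}_b\ e\ e\ v\mid \mathsf{XEq}_{x:\tau\to\tau}\ e\ e\ v$. Types $\tau ::= \{x{:}b\mid e\}\mid x{:}\tau\to\tau\mid \mathsf{PEq}_{\tau}\{e\}\{e\}$. $e[x:=e']$ is capture-avoiding substitution. Reduction: evaluation contexts $E ::= \bullet\mid E\ e\mid v\ E\mid \mathsf{BEq}_b\ e\ e\ E\mid\mathsf{XEq}_{x:\tau\to\tau}\ e\ e\ E$; $E[e]\to E[e']$ if $e\to e'$; $(\lambda x{:}\tau.\,e)\ v\to e[x:=v]$; $(=_b)\ c_1\to(=_{(c_1,b)})$; $(=_{(c_1,b)})\ c_2\to\mathsf{true}$ if $c_1,c_2$ syntactically equal, else $\to\mathsf{false}$. $\to^*$ is the reflexive–transitive closure. Parallel reduction $e\Rrightarrow e'$ and $\tau\Rrightarrow\tau'$ is defined inductively: $x\Rrightarrow x$; $c\Rrightarrow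 c$; $\lambda x{:}\tau.e\Rrightarrow\lambda x{:}\tau'.e'$ if $\tau\Rrightarrow\tau'$, $e\Rrightarrow e'$; $e_1\ e_2\Rrightarrow e_1'\ e_2'$ if $e_i\Rrightarrow e_i'$; $(\lambda x{:}\tau.e)\ v\Rrightarrow e'[x:=v']$ if $e\Rrightarrow e'$ and $v\Rrightarrow v'$; $(=_b)\ c_1\Rrightarrow(=_{(c_1,b)})$; $(=_{(c_1,b)})\ c_2\Rrightarrow d$ where $d=\mathsf{true}$ if $c_1,c_2$ are syntactically equal and $d=\mathsf{false}$ otherwise; $\mathsf{BEq}_b\ e_l\ e_r\ e\Rrightarrow\mathsf{BEq}_b\ e_l'\ e_r'\ e'$ if $e_l\Rrightarrow e_l'$, $e_r\Rrightarrow e_r'$, $e\Rrightarrow e'$; $\mathsf{XEq}_{x:\tau_x\to\tau}\ e_l\ e_r\ e\Rrightarrow\mathsf{XEq}_{x:\tau_x'\to\tau'}\ e_l'\ e_r'\ e'$ if all five components parallel reduce; on types: $\{x{:}b\mid r\}\Rrightarrow\{x{:}b\mid r'\}$ if $r\Rrightarrow r'$; $x{:}\tau_x\to\tau\Rrightarrow x{:}\tau_x'\to\tau'$ if $\tau_x\Rrightarrow\tau_x'$, $\tau\Rrightarrow\tau'$; $\mathsf{PEq}_\tau\{e_l\}\{e_r\}\Rrightarrow\mathsf{PEq}_{\tau'}\{e_l'\}\{e_r'\}$ if all components parallel reduce. *)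

theory Defs
  imports Main
begin

text \<open>Binders: in Lam t e, e binds index 0; in TRefn b r, r binds index 0;
  in TFun tx t, t binds index 0; in XEq tx t el er e, t binds index 0.\<close>

datatype basic = TBool | TUnit

datatype const = CTrue | CFalse | CUnit | CEq basic | CEq1 const basic

datatype expr =
    Const const
  | Var nat
  | App expr expr
  | Lam ty expr
  | BEq basic expr expr expr
  | XEq ty ty expr expr expr
and ty =
    TRefn basic expr
  | TFun ty ty
  | TPEq ty expr expr

fun lift_e :: "nat \<Rightarrow> expr \<Rightarrow> expr" and lift_t :: "nat \<Rightarrow> ty \<Rightarrow> ty" where
  "lift_e c (Const k) = Const k"
| "lift_e c (Var i) = (if i < c then Var i else Var (Suc i))"
| "lift_e c (App e1 e2) = App (lift_e c e1) (lift_e c e2)"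
| "lift_e c (Lam t e) = Lam (lift_t c t) (lift_e (Suc c) e)"
| "lift_e c (BEq b el er e) = BEq b (lift_e c el) (lift_e c er) (lift_e c e)"
| "lift_e c (XEq tx t el er e) =
     XEq (lift_t c tx) (lift_t (Suc c) t) (lift_e c el) (lift_e c er) (lift_e c e)"
| "lift_t c (TRefn b r) = TRefn b (lift_e (Suc c) r)"
| "lift_t c (TFun tx t) = TFun (lift_t c tx) (lift_t (Suc c) t)"
| "lift_t c (TPEq t el er) = TPEq (lift_t c t) (lift_e c el) (lift_e c er)"

fun subst_e :: "nat \<Rightarrow> expr \<Rightarrow> expr \<Rightarrow> expr" and subst_t :: "nat \<Rightarrow> expr \<Rightarrow> ty \<Rightarrow> ty" where
  "subst_e j s (Const k) = Const k"
| "subst_e j s (Var i) = (if i < j then Var i else if i = j then s else Var (i - 1))"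
| "subst_e j s (App e1 e2) = App (subst_e j s e1) (subst_e j s e2)"
| "subst_e j s (Lam t e) = Lam (subst_t j s t) (subst_e (Suc j) (lift_e 0 s) e)"
| "subst_e j s (BEq b el er e) = BEq b (subst_e j s el) (subst_e j s er) (subst_e j s e)"
| "subst_e j s (XEq tx t el er e) =
     XEq (subst_t j s tx) (subst_t (Suc j) (lift_e 0 s) t) (subst_e j s el) (subst_e j s er) (subst_e j s e)"
| "subst_t j s (TRefn b r) = TRefn b (subst_e (Suc j) (lift_e 0 s) r)"
| "subst_t j s (TFun tx t) = TFun (subst_t j s tx) (subst_t (Suc j) (lift_e 0 s) t)"
| "subst_t j s (TPEq t el er) = TPEq (subst_t j s t) (subst_e j s el) (subst_e j s er)"

text \<open>e[x:=v] where x is the variable bound by the enclosing binder.\<close>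
definition subst0 :: "expr \<Rightarrow> expr \<Rightarrow> expr" where
  "subst0 e v = subst_e 0 v e"

fun is_val :: "expr \<Rightarrow> bool" where
  "is_val (Const k) = True"
| "is_val (Lam t e) = True"
| "is_val (BEq b el er v) = is_val v"
| "is_val (XEq tx t el er v) = is_val v"
| "is_val _ = False"

text \<open>Small-step reduction (evaluation contexts unfolded into congruence rules).\<close>
inductive step :: "expr \<Rightarrow> expr \<Rightarrow> bool" where
  step_app1: "step e e' \<Longrightarrow> step (App e e1) (App e' e1)"
| step_app2: "is_val v \<Longrightarrow> step e e' \<Longrightarrow> step (App v e) (App v e')"
| step_beq: "step e e' \<Longrightarrow> step (BEq b el er e) (BEq b el er e')"
| step_xeq: "step e e' \<Longrightarrow> step (XEq tx t el er e) (XEq tx t el er e')"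
| step_beta: "is_val v \<Longrightarrow> step (App (Lam t e) v) (subst0 e v)"
| step_eq: "step (App (Const (CEq b)) (Const c1)) (Const (CEq1 c1 b))"
| step_eq1: "step (App (Const (CEq1 c1 b)) (Const c2)) (Const (if c1 = c2 then CTrue else CFalse))"

abbreviation steps :: "expr \<Rightarrow> expr \<Rightarrow> bool" where
  "steps \<equiv> step\<^sup>*\<^sup>*"

inductive par_e :: "expr \<Rightarrow> expr \<Rightarrow> bool" and par_t :: "ty \<Rightarrow> ty \<Rightarrow> bool" where
  par_var: "par_e (Var x) (Var x)"
| par_const: "par_e (Const c) (Const c)"
| par_lam: "par_t t t' \<Longrightarrow> par_e e e' \<Longrightarrow> par_e (Lam t e) (Lam t' e')"
| par_app: "par_e e1 e1' \<Longrightarrow> par_e e2 e2' \<Longrightarrow> par_e (App e1 e2) (App e1' e2')"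
| par_beta: "is_val v \<Longrightarrow> par_e e e' \<Longrightarrow> par_e v v' \<Longrightarrow> par_e (App (Lam t e) v) (subst0 e' v')"
| par_eq: "par_e (App (Const (CEq b)) (Const c1)) (Const (CEq1 c1 b))"
| par_eq1: "par_e (App (Const (CEq1 c1 b)) (Const c2)) (Const (if c1 = c2 then CTrue else CFalse))"
| par_beq: "par_e el el' \<Longrightarrow> par_e er er' \<Longrightarrow> par_e e e' \<Longrightarrow> par_e (BEq b el er e) (BEq b el' er' e')"
| par_xeq: "par_t tx tx' \<Longrightarrow> par_t t t' \<Longrightarrow> par_e el el' \<Longrightarrow> par_e er er' \<Longrightarrow> par_e e e'
            \<Longrightarrow> par_e (XEq tx t el er e) (XEq tx' t' el' er' e')"
| par_refn: "par_e r r' \<Longrightarrow> par_t (TRefn b r) (TRefn b r')"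
| par_fun: "par_t tx tx' \<Longrightarrow> par_t t t' \<Longrightarrow> par_t (TFun tx t) (TFun tx' t')"
| par_peq: "par_t t t' \<Longrightarrow> par_e el el' \<Longrightarrow> par_e er er' \<Longrightarrow> par_t (TPEq t el er) (TPEq t' el' er')"

end

theory Submission
  imports Defs
begin

(* Forward direction: one parallel step simulates an evaluation step, i.e. if e1 \<rightarrow> e1' and
   e1 \<Rrightarrow> e2 then e2 \<rightarrow>* e2' with e1' \<Rrightarrow> e2'; iterating this along e1 \<rightarrow>* c ends in
   c \<Rrightarrow> e2', and a constant parallel-reduces only to itself.

   Backward direction: an evaluation step can be moved in front of a parallel step, i.e. if
   e1 \<Rrightarrow> e2 \<rightarrow> e3 then e1 \<rightarrow>* e1' \<Rrightarrow> e3, and if e1 \<Rrightarrow> v with v a value then e1 evaluates to a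
   value w \<Rrightarrow> v.  Induction on e1 \<Rrightarrow> e2 breaks down when the parallel step contracts a \<beta>-redex at
   an evaluation position of e1: one has to continue with the contractum, which is not a
   subterm.  Annotating parallel reduction with the nesting depth of such contractions gives a
   measure that decreases there, because substituting values does not increase it. *)

lemma lift_lift:
  "i \<le> c \<Longrightarrow> lift_e (Suc c) (lift_e i e) = lift_e i (lift_e c e)"
  "i \<le> c \<Longrightarrow> lift_t (Suc c) (lift_t i t) = lift_t i (lift_t c t)"
  by (induction e and t arbitrary: i c and i c) auto

lemma subst_lift:
  "subst_e i v (lift_e i e) = e"
  "subst_t i v (lift_t i t) = t"
  by (induction e and t arbitrary: i v and i v) auto

lemma lift_subst_le:
  "j \<le> c \<Longrightarrow> lift_e c (subst_e j s e) = subst_e j (lift_e c s) (lift_e (Suc c) e)"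
  "j \<le> c \<Longrightarrow> lift_t c (subst_t j s t) = subst_t j (lift_e c s) (lift_t (Suc c) t)"
  by (induction e and t arbitrary: j c s and j c s) (auto simp: lift_lift)

lemma lift_subst_ge:
  "i \<le> j \<Longrightarrow> lift_e i (subst_e j s e) = subst_e (Suc j) (lift_e i s) (lift_e i e)"
  "i \<le> j \<Longrightarrow> lift_t i (subst_t j s t) = subst_t (Suc j) (lift_e i s) (lift_t i t)"
  by (induction e and t arbitrary: i j s and i j s) (auto simp: lift_lift)

lemma subst_subst:
  "i \<le> j \<Longrightarrow> subst_e j s (subst_e i v e) = subst_e i (subst_e j s v) (subst_e (Suc j) (lift_e i s) e)"
  "i \<le> j \<Longrightarrow> subst_t j s (subst_t i v t) = subst_t i (subst_e j s v) (subst_t (Suc j) (lift_e i s) t)"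
  by (induction e and t arbitrary: i j s v and i j s v)
     (auto simp: lift_lift lift_subst_ge subst_lift)

lemma subst0_subst:
  "subst_e j s (subst0 e v) = subst0 (subst_e (Suc j) (lift_e 0 s) e) (subst_e j s v)"
  by (simp add: subst0_def subst_subst)

lemma lift_subst0:
  "lift_e c (subst0 e v) = subst0 (lift_e (Suc c) e) (lift_e c v)"
  by (simp add: subst0_def lift_subst_le)

lemma is_val_lift: "is_val e \<Longrightarrow> is_val (lift_e c e)"
  by (induction e arbitrary: c rule: is_val.induct) auto

lemma is_val_subst: "is_val e \<Longrightarrow> is_val (subst_e j s e)"
  by (induction e arbitrary: j s rule: is_val.induct) auto

lemma step_not_val: "step e e' \<Longrightarrow> \<not> is_val e"
  by (induction rule: step.induct) auto

lemma steps_App_left: "steps e e' \<Longrightarrow> steps (App e a) (App e' a)"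
  by (induction rule: rtranclp_induct) (auto intro: rtranclp.rtrancl_into_rtrancl step.intros)

lemma steps_App_right: "steps e e' \<Longrightarrow> is_val v \<Longrightarrow> steps (App v e) (App v e')"
  by (induction rule: rtranclp_induct) (auto intro: rtranclp.rtrancl_into_rtrancl step.intros)

lemma steps_App_values:
  "steps f v \<Longrightarrow> steps a w \<Longrightarrow> is_val v \<Longrightarrow> steps (App f a) (App v w)"
  by (meson rtranclp_trans steps_App_left steps_App_right)

lemma steps_BEq: "steps e e' \<Longrightarrow> steps (BEq b el er e) (BEq b el er e')"
  by (induction rule: rtranclp_induct) (auto intro: rtranclp.rtrancl_into_rtrancl step.intros)

lemma steps_XEq: "steps e e' \<Longrightarrow> steps (XEq tx t el er e) (XEq tx t el er e')"
  by (induction rule: rtranclp_induct) (auto intro: rtranclp.rtrancl_into_rtrancl step.intros)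

(* Forms of par_eq1 and wpar_eq1 that still apply after the simplifier has split the if. *)
lemma par_eq1_Const:
  "d = (if c1 = c2 then CTrue else CFalse) \<Longrightarrow> par_e (App (Const (CEq1 c1 b)) (Const c2)) (Const d)"
  using par_eq1 by simp

lemma par_lift:
  "par_e e e' \<Longrightarrow> par_e (lift_e c e) (lift_e c e')"
  "par_t t t' \<Longrightarrow> par_t (lift_t c t) (lift_t c t')"
  by (induction arbitrary: c and c rule: par_e_par_t.inducts)
     (auto simp: lift_subst0 is_val_lift
       intro: par_e_par_t.intros par_eq1_Const)

lemma par_subst:
  "par_e e e' \<Longrightarrow> par_e s s' \<Longrightarrow> par_e (subst_e j s e) (subst_e j s' e')"
  "par_t t t' \<Longrightarrow> par_e s s' \<Longrightarrow> par_t (subst_t j s t) (subst_t j s' t')"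
  by (induction arbitrary: j s s' and j s s' rule: par_e_par_t.inducts)
     (auto simp: subst0_subst is_val_subst
       intro!: par_e_par_t.intros par_eq1_Const, (metis par_lift(1))+)

inductive_cases par_e_ConstE: "par_e (Const c) e"
inductive_cases par_e_LamE: "par_e (Lam t b) e"
inductive_cases par_e_BEqE: "par_e (BEq b el er e) e'"
inductive_cases par_e_XEqE: "par_e (XEq tx t el er e) e'"
inductive_cases par_e_AppE: "par_e (App f a) e"

lemma par_e_is_val: "par_e e e' \<Longrightarrow> is_val e \<Longrightarrow> is_val e'"
  by (induction e arbitrary: e' rule: is_val.induct)
     (auto elim: par_e_ConstE par_e_LamE par_e_BEqE par_e_XEqE)

lemma par_e_val_Const: "par_e v (Const c) \<Longrightarrow> is_val v \<Longrightarrow> v = Const c"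
  by (cases rule: par_e.cases) auto

lemma par_e_val_LamE:
  assumes "par_e v (Lam t e)" "is_val v"
  obtains t0 e0 where "v = Lam t0 e0" "par_e e0 e"
  using assms by (cases rule: par_e.cases) auto

lemma par_redex_simulation:
  assumes "step (App f a) e" "is_val f" "is_val a" "par_e (App f a) e2"
  shows "\<exists>e2'. steps e2 e2' \<and> par_e e e2'"
  using assms(1)
proof (cases rule: step.cases)
  case (step_beta t b)
  from assms(4) show ?thesis
  proof (cases rule: par_e.cases)
    case (par_app f' a')
    then obtain t' b' where f': "f' = Lam t' b'" "par_e b b'" using step_beta by (auto elim: par_e_LamE)
    have "is_val a'" using par_app assms(3) par_e_is_val by blast
    then have "step e2 (subst0 b' a')" using par_app f' by (simp add: step.step_beta)
    moreover have "par_e e (subst0 b' a')"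
      using par_app f' step_beta by (simp add: subst0_def par_subst)
    ultimately show ?thesis by blast
  qed (use step_beta in \<open>auto simp: subst0_def intro: par_subst\<close>)
next
  case step_eq
  with assms(4) have "e2 = App f a \<or> e2 = e" by (auto elim!: par_e_AppE par_e_ConstE)
  with assms(1) step_eq show ?thesis by (metis par_const rtranclp.rtrancl_refl r_into_rtranclp)
next
  case step_eq1
  with assms(4) have "e2 = App f a \<or> e2 = e" by (auto elim!: par_e_AppE par_e_ConstE)
  with assms(1) step_eq1 show ?thesis by (metis par_const rtranclp.rtrancl_refl r_into_rtranclp)
qed (use assms(2,3) step_not_val in auto)

lemma par_step_simulation:
  "step e1 e1' \<Longrightarrow> par_e e1 e2 \<Longrightarrow> \<exists>e2'. steps e2 e2' \<and> par_e e1' e2'"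
proof (induction arbitrary: e2 rule: step.induct)
  case (step_app1 e e' a)
  from step_app1.prems show ?case
  proof (cases rule: par_e.cases)
    case (par_app f a')
    with step_app1.IH obtain f' where "steps f f'" "par_e e' f'" by blast
    with par_app show ?thesis by (blast intro: steps_App_left par_e_par_t.par_app)
  qed (use step_not_val[OF step_app1.hyps] in auto)
next
  case (step_app2 v e e')
  from step_app2.prems show ?case
  proof (cases rule: par_e.cases)
    case (par_app v' a)
    with step_app2.IH obtain a' where "steps a a'" "par_e e' a'" by blast
    moreover have "is_val v'" using par_app step_app2.hyps(1) par_e_is_val by blast
    ultimately show ?thesis using par_app by (blast intro: steps_App_right par_e_par_t.par_app)
  qed (use step_not_val[OF step_app2.hyps(2)] in auto)
next
  case (step_beq e e' b el er)
  from step_beq.prems show ?case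
  proof (cases rule: par_e.cases)
    case (par_beq el' er' f)
    with step_beq.IH obtain f' where "steps f f'" "par_e e' f'" by blast
    with par_beq show ?thesis by (blast intro: steps_BEq par_e_par_t.par_beq)
  qed
next
  case (step_xeq e e' tx t el er)
  from step_xeq.prems show ?case
  proof (cases rule: par_e.cases)
    case (par_xeq tx' t' el' er' f)
    with step_xeq.IH obtain f' where "steps f f'" "par_e e' f'" by blast
    with par_xeq show ?thesis by (blast intro: steps_XEq par_e_par_t.par_xeq)
  qed
next
  case (step_beta v t e)
  then show ?case using par_redex_simulation[OF step.step_beta] by simp
next
  case (step_eq b c1)
  then show ?case using par_redex_simulation[OF step.step_eq] by simp
next
  case (step_eq1 c1 b c2)
  then show ?case using par_redex_simulation[OF step.step_eq1] by simp
qed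

lemma par_preserves_steps_Const:
  "steps e1 (Const c) \<Longrightarrow> par_e e1 e2 \<Longrightarrow> steps e2 (Const c)"
proof (induction arbitrary: e2 rule: converse_rtranclp_induct)
  case base
  then show ?case by (auto elim: par_e_ConstE)
next
  case (step e1 e1')
  then obtain e2' where "steps e2 e2'" "par_e e1' e2'" using par_step_simulation by blast
  with step.IH show ?case by (meson rtranclp_trans)
qed

(* wpar n e e' is par_e e e' where the \<beta>-contractions at evaluation positions (both sides of
   an application, last argument of BEq and XEq) are nested at most n deep.  Parallel steps
   inside values are never replayed by evaluation, so they carry no weight. *)
inductive wpar :: "nat \<Rightarrow> expr \<Rightarrow> expr \<Rightarrow> bool" where
  wpar_val: "is_val e \<Longrightarrow> par_e e e' \<Longrightarrow> wpar n e e'"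
| wpar_var: "wpar n (Var x) (Var x)"
| wpar_app: "wpar n f f' \<Longrightarrow> wpar n a a' \<Longrightarrow> wpar n (App f a) (App f' a')"
| wpar_beta: "is_val v \<Longrightarrow> par_e v v' \<Longrightarrow> wpar m e e' \<Longrightarrow> m < n
    \<Longrightarrow> wpar n (App (Lam t e) v) (subst0 e' v')"
| wpar_eq: "wpar n (App (Const (CEq b)) (Const c1)) (Const (CEq1 c1 b))"
| wpar_eq1: "wpar n (App (Const (CEq1 c1 b)) (Const c2)) (Const (if c1 = c2 then CTrue else CFalse))"
| wpar_beq: "par_e el el' \<Longrightarrow> par_e er er' \<Longrightarrow> wpar n e e'
    \<Longrightarrow> wpar n (BEq b el er e) (BEq b el' er' e')"
| wpar_xeq: "par_t tx tx' \<Longrightarrow> par_t t t' \<Longrightarrow> par_e el el' \<Longrightarrow> par_e er er' \<Longrightarrow> wpar n e e'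
    \<Longrightarrow> wpar n (XEq tx t el er e) (XEq tx' t' el' er' e')"

lemma wpar_eq1_Const:
  "d = (if c1 = c2 then CTrue else CFalse) \<Longrightarrow> wpar n (App (Const (CEq1 c1 b)) (Const c2)) (Const d)"
  using wpar_eq1 by simp

lemma wpar_mono: "wpar m e e' \<Longrightarrow> m \<le> n \<Longrightarrow> wpar n e e'"
proof (induction arbitrary: n rule: wpar.induct)
  case (wpar_beta v v' k e e' m t)
  then show ?case by (meson order.strict_trans2 wpar.wpar_beta)
qed (auto intro: wpar.intros wpar_eq1_Const)

lemma wpar_par_e: "wpar n e e' \<Longrightarrow> par_e e e'"
  by (induction rule: wpar.induct) (auto intro: par_e_par_t.intros par_eq1_Const)

lemma par_e_wpar: "par_e e e' \<Longrightarrow> \<exists>n. wpar n e e'"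
proof (induction rule: par_e_par_t.inducts(1)[where ?P2.0 = "\<lambda>_ _. True"])
  case (par_app f f' a a')
  then obtain n1 n2 where "wpar n1 f f'" "wpar n2 a a'" by blast
  then have "wpar (max n1 n2) (App f a) (App f' a')"
    by (meson max.cobounded1 max.cobounded2 wpar_app wpar_mono)
  then show ?case by blast
qed (fastforce intro: wpar.intros wpar_eq1_Const par_e_par_t.intros)+


lemma wpar_lift: "wpar n e e' \<Longrightarrow> wpar n (lift_e c e) (lift_e c e')"
proof (induction arbitrary: c rule: wpar.induct)
  case (wpar_beta v v' m e e' n t)
  then show ?case
    unfolding lift_e.simps lift_subst0 by (intro wpar.wpar_beta) (simp_all add: is_val_lift par_lift)
qed (auto simp: is_val_lift intro: wpar.intros wpar_eq1_Const par_lift)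

lemma wpar_subst:
  "wpar n e e' \<Longrightarrow> is_val s \<Longrightarrow> par_e s s' \<Longrightarrow> wpar n (subst_e j s e) (subst_e j s' e')"
proof (induction arbitrary: j s s' rule: wpar.induct)
  case (wpar_beta v v' m e e' n t)
  then show ?case
    unfolding subst_e.simps subst0_subst
    by (intro wpar.wpar_beta) (simp_all add: is_val_subst is_val_lift par_subst par_lift)
next
  case (wpar_xeq tx tx' t t' el el' er er' n e e')
  then show ?case by (simp add: par_subst par_lift wpar.wpar_xeq)
qed (auto simp: is_val_subst intro: wpar.intros wpar_eq1_Const par_subst)
lemma wpar_subst0:
  "wpar n e e' \<Longrightarrow> is_val v \<Longrightarrow> par_e v v' \<Longrightarrow> wpar n (subst0 e v) (subst0 e' v')"
  unfolding subst0_def by (rule wpar_subst)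

lemma wpar_AppE:
  assumes "wpar n e (App f' a')"
  obtains (App) f a where "e = App f a" "wpar n f f'" "wpar n a a'"
    | (head_beta) e1 m where "step e e1" "wpar m e1 (App f' a')" "m < n"
  using assms
proof (cases rule: wpar.cases)
  case (wpar_beta v v' m b b' t)
  then show ?thesis using head_beta step.step_beta wpar_subst0 by metis
next
  case wpar_val
  then show ?thesis using par_e_is_val by fastforce
qed (use App in auto)

lemma wpar_BEqE:
  assumes "wpar n e (BEq b el' er' f')"
  obtains (BEq) el er f where "e = BEq b el er f" "par_e el el'" "par_e er er'" "wpar n f f'"
    | (head_beta) e1 m where "step e e1" "wpar m e1 (BEq b el' er' f')" "m < n"
  using assms
proof (cases rule: wpar.cases)
  case wpar_val
  from wpar_val(2,1) obtain el er f where "e = BEq b el er f" "par_e el el'" "par_e er er'" "par_e f f'"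
    by (cases rule: par_e.cases) auto
  with wpar_val(1) show ?thesis using BEq wpar.wpar_val by simp
next
  case (wpar_beta v v' m b b' t)
  then show ?thesis using head_beta step.step_beta wpar_subst0 by metis
qed (use BEq in auto)

lemma wpar_XEqE:
  assumes "wpar n e (XEq tx' t' el' er' f')"
  obtains (XEq) tx t el er f where "e = XEq tx t el er f" "par_t tx tx'" "par_t t t'"
      "par_e el el'" "par_e er er'" "wpar n f f'"
    | (head_beta) e1 m where "step e e1" "wpar m e1 (XEq tx' t' el' er' f')" "m < n"
  using assms
proof (cases rule: wpar.cases)
  case wpar_val
  from wpar_val(2,1) obtain tx t el er f where "e = XEq tx t el er f" "par_t tx tx'" "par_t t t'"
      "par_e el el'" "par_e er er'" "par_e f f'"
    by (cases rule: par_e.cases) auto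
  with wpar_val(1) show ?thesis using XEq wpar.wpar_val by simp
next
  case (wpar_beta v v' m b b' t)
  then show ?thesis using head_beta step.step_beta wpar_subst0 by metis
qed (use XEq in auto)

lemma wpar_value_steps:
  "wpar n e v \<Longrightarrow> is_val v \<Longrightarrow> \<exists>w. steps e w \<and> is_val w \<and> par_e w v"
proof (induction n arbitrary: e v rule: less_induct)
  case (less n)
  have "\<exists>w. steps e w \<and> is_val w \<and> par_e w v" if "wpar k e v" "k \<le> n" "is_val v" for k e v
    using that
  proof (induction rule: wpar.induct)
    case (wpar_beta u u' m b b' k t)
    then obtain w where "steps (subst0 b u) w" "is_val w" "par_e w (subst0 b' u')"
      using less.IH wpar_subst0 by (metis order.strict_trans2)
    moreover have "step (App (Lam t b) u) (subst0 b u)"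
      using wpar_beta.hyps(1) by (rule step.step_beta)
    ultimately show ?case by (meson converse_rtranclp_into_rtranclp)
  next
    case (wpar_beq el el' er er' k f f' b)
    then obtain w where "steps f w" "is_val w" "par_e w f'" by auto
    with wpar_beq.hyps show ?case by (auto intro!: steps_BEq par_e_par_t.par_beq)
  next
    case (wpar_xeq tx tx' t t' el el' er er' k f f')
    then obtain w where "steps f w" "is_val w" "par_e w f'" by auto
    with wpar_xeq.hyps show ?case by (auto intro!: steps_XEq par_e_par_t.par_xeq)
  next
    case (wpar_eq k b c1)
    then show ?case by (meson is_val.simps(1) par_const r_into_rtranclp step.step_eq)
  next
    case (wpar_eq1 k c1 b c2)
    then show ?case by (meson is_val.simps(1) par_const r_into_rtranclp step.step_eq1)
  qed auto
  with less.prems show ?case by blast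
qed

lemma par_e_redex_step:
  assumes "step (App f a) e" "par_e g f" "par_e b a" "is_val g" "is_val b"
  shows "\<exists>e'. step (App g b) e' \<and> par_e e' e"
proof -
  have "is_val f" "is_val a" using assms(2-5) par_e_is_val by blast+
  from assms(1) show ?thesis
  proof (cases rule: step.cases)
    case (step_beta t e0)
    with assms(2,4) obtain t1 e1 where "g = Lam t1 e1" "par_e e1 e0"
      by (auto elim: par_e_val_LamE)
    with step_beta assms(3,5) show ?thesis
      by (auto simp: subst0_def intro!: step.step_beta par_subst)
  next
    case step_eq
    with assms(2-5) have "App g b = App f a" by (auto dest: par_e_val_Const)
    with assms(1) step_eq show ?thesis by (auto intro: par_const)
  next
    case step_eq1
    with assms(2-5) have "App g b = App f a" by (auto dest: par_e_val_Const)
    with assms(1) step_eq1 show ?thesis by (auto intro: par_const)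
  qed (use \<open>is_val f\<close> \<open>is_val a\<close> step_not_val in auto)
qed

lemma wpar_redex_postpone:
  assumes smaller: "\<And>m e1 e2 e3. m < n \<Longrightarrow> wpar m e1 e2 \<Longrightarrow> step e2 e3
      \<Longrightarrow> \<exists>e1'. steps e1 e1' \<and> par_e e1' e3"
    and "wpar n e1 (App f a)" "is_val f" "is_val a" "step (App f a) e3"
  shows "\<exists>e1'. steps e1 e1' \<and> par_e e1' e3"
  using assms(2)
proof (cases rule: wpar_AppE)
  case (App g b)
  obtain g' where g': "steps g g'" "is_val g'" "par_e g' f"
    using App(2) assms(3) wpar_value_steps by blast
  obtain b' where b': "steps b b'" "is_val b'" "par_e b' a"
    using App(3) assms(4) wpar_value_steps by blast
  obtain e where "step (App g' b') e" "par_e e e3"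
    using par_e_redex_step assms(5) g' b' by blast
  with App(1) g' b' show ?thesis
    by (meson rtranclp.rtrancl_into_rtrancl steps_App_values)
next
  case (head_beta e m)
  then show ?thesis using smaller assms(5) by (meson converse_rtranclp_into_rtranclp)
qed

lemma wpar_step_postpone_from_smaller:
  assumes smaller: "\<And>m e1 e2 e3. m < n \<Longrightarrow> wpar m e1 e2 \<Longrightarrow> step e2 e3
      \<Longrightarrow> \<exists>e1'. steps e1 e1' \<and> par_e e1' e3"
  shows "step e2 e3 \<Longrightarrow> wpar n e1 e2 \<Longrightarrow> \<exists>e1'. steps e1 e1' \<and> par_e e1' e3"
proof (induction arbitrary: e1 rule: step.induct)
  case (step_app1 f f' a)
  from step_app1.prems show ?case
  proof (cases rule: wpar_AppE)
    case (App g b)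
    with step_app1.IH obtain g' where "steps g g'" "par_e g' f'" by blast
    with App show ?thesis by (blast intro: steps_App_left par_app wpar_par_e)
  qed (use smaller step.step_app1[OF step_app1.hyps] in \<open>meson converse_rtranclp_into_rtranclp\<close>)
next
  case (step_app2 f a a')
  from step_app2.prems show ?case
  proof (cases rule: wpar_AppE)
    case (App g b)
    with step_app2.IH obtain b' where b': "steps b b'" "par_e b' a'" by blast
    obtain g' where g': "steps g g'" "is_val g'" "par_e g' f"
      using App(2) step_app2.hyps(1) wpar_value_steps by blast
    from App(1) g' b' show ?thesis by (blast intro: steps_App_values par_app)
  qed (use smaller step.step_app2[OF step_app2.hyps] in \<open>meson converse_rtranclp_into_rtranclp\<close>)
next
  case (step_beq f f' b el er)
  from step_beq.prems show ?case
  proof (cases rule: wpar_BEqE)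
    case (BEq el0 er0 g)
    with step_beq.IH obtain g' where "steps g g'" "par_e g' f'" by blast
    with BEq show ?thesis by (blast intro: steps_BEq par_beq)
  qed (use smaller step.step_beq[OF step_beq.hyps] in \<open>meson converse_rtranclp_into_rtranclp\<close>)
next
  case (step_xeq f f' tx t el er)
  from step_xeq.prems show ?case
  proof (cases rule: wpar_XEqE)
    case (XEq tx0 t0 el0 er0 g)
    with step_xeq.IH obtain g' where "steps g g'" "par_e g' f'" by blast
    with XEq show ?thesis by (blast intro: steps_XEq par_xeq)
  qed (use smaller step.step_xeq[OF step_xeq.hyps] in \<open>meson converse_rtranclp_into_rtranclp\<close>)
next
  case (step_beta v t e)
  then show ?case using wpar_redex_postpone[OF smaller _ _ _ step.step_beta] by simp
next
  case (step_eq b c1)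
  then show ?case using wpar_redex_postpone[OF smaller _ _ _ step.step_eq] by simp
next
  case (step_eq1 c1 b c2)
  then show ?case using wpar_redex_postpone[OF smaller _ _ _ step.step_eq1] by simp
qed

lemma wpar_step_postpone:
  "wpar n e1 e2 \<Longrightarrow> step e2 e3 \<Longrightarrow> \<exists>e1'. steps e1 e1' \<and> par_e e1' e3"
proof (induction n arbitrary: e1 e2 e3 rule: less_induct)
  case (less n)
  then show ?case using wpar_step_postpone_from_smaller by blast
qed

lemma par_reflects_steps_Const:
  "steps e2 (Const c) \<Longrightarrow> par_e e1 e2 \<Longrightarrow> steps e1 (Const c)"
proof (induction arbitrary: e1 rule: converse_rtranclp_induct)
  case base
  then obtain n where "wpar n e1 (Const c)" using par_e_wpar by blast
  then obtain w where "steps e1 w" "is_val w" "par_e w (Const c)"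
    using wpar_value_steps by fastforce
  then show ?case using par_e_val_Const by blast
next
  case (step e2 e2')
  then obtain n where "wpar n e1 e2" using par_e_wpar by blast
  then obtain e1' where "steps e1 e1'" "par_e e1' e2'" using wpar_step_postpone step.hyps(1) by blast
  with step.IH show ?case by (meson rtranclp_trans)
qed

theorem theoremC16:
  assumes "par_e e1 e2"
  shows "\<forall>c. steps e1 (Const c) \<longleftrightarrow> steps e2 (Const c)"
  using assms par_preserves_steps_Const par_reflects_steps_Const by blast

end
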